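(* Let $p_1,p_2,q$ be non-negative integers, $k$ an integer and $x_1,x_2\in\mathbb{C}$. Define rational functions $\mathcal{R}_{\mu,k}(y)$ for integers $\mu\ge -1$ by $\mathcal{R}_{-1,k}(y)=-1$ and, for $\mu\ge 0$, $$\mathcal{R}_{\mu,k}(y)=y(y+\mu+2)^{k}\mathcal{R}_{\mu-1,k}(y)-(y+1)^{k+1}\mathcal{R}_{\mu-1,k}(y+1).$$ Then $$\sum_{l=0}^{q}\binom{q}{l}(-x_1)^{q-l}B^{(k)}_{p_1+l,p_2}(x_1,x_2)=\sum_{l=0}^{q}\binom{q}{l}(-x_2)^{q-l}B^{(k)}_{p_1,p_2+l}(x_1,x_2)=-\sum_{l=0}^{p_1+p_2}S_{1,x_1}^{1,x_2,p_2}(p_1,l)\,\frac{(-1)^{l}\,l!\,\mathcal{R}_{q-1,k}(l)}{\left(\prod_{i=1}^{q+1}(l+i)\right)^{k}}.$$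
   Context: For non-negative integers $p_1,p_2,l$ and $x_1,x_2\in\mathbb{C}$, the generalized Stirling numbers are $$S_{1,x_1}^{1,x_2,p_2}(p_1,l)=\frac{1}{l!}\sum_{j=0}^{l}(-1)^{j}\binom{l}{j}(l-j+x_1)^{p_1}(l-j+x_2)^{p_2}.$$ For an integer $k$, the bi-variate poly-Bernoulli polynomial is $$B^{(k)}_{p_1,p_2}(x_1,x_2)=\sum_{l=0}^{p_1+p_2}S_{1,x_1}^{1,x_2,p_2}(p_1,l)\frac{(-1)^{l}\,l!}{(l+1)^{k}}.$$ *)

theory Defs
  imports Complex_Main
begin

definition gen_stirling :: "complex \<Rightarrow> complex \<Rightarrow> nat \<Rightarrow> nat \<Rightarrow> nat \<Rightarrow> complex" where
  "gen_stirling x1 x2 p2 p1 l =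
     (1 / of_nat (fact l)) *
     (\<Sum>j=0..l. (-1)^j * of_nat (l choose j) *
        (of_nat (l - j) + x1)^p1 * (of_nat (l - j) + x2)^p2)"

definition bipoly_bernoulli :: "int \<Rightarrow> nat \<Rightarrow> nat \<Rightarrow> complex \<Rightarrow> complex \<Rightarrow> complex" where
  "bipoly_bernoulli k p1 p2 x1 x2 =
     (\<Sum>l=0..p1+p2. gen_stirling x1 x2 p2 p1 l *
        ((-1)^l * of_nat (fact l) / (of_nat (l + 1)) powi k))"

text \<open>The rational functions R_{mu,k}, shifted by one: Rfun k m = R_{m-1,k}, so
  Rfun k 0 = R_{-1,k} = -1 and Rfun k (Suc m) = R_{m,k}.\<close>
fun Rfun :: "int \<Rightarrow> nat \<Rightarrow> complex \<Rightarrow> complex" where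
  "Rfun k 0 y = -1"
| "Rfun k (Suc m) y =
     y * (y + of_nat m + 2) powi k * Rfun k m y - (y + 1) powi (k + 1) * Rfun k m (y + 1)"

end

theory Submission
  imports Defs
begin

text \<open>
  Write f(t) = (t + x1)^p1 (t + x2)^p2. The generalized Stirling number is the forward
  difference \<open>\<Delta>\<^sup>l f(0) / l!\<close>, so B^(k)_{p1,p2}(x1,x2) = \<open>\<Sum>\<^sub>m \<Delta>\<^sup>m f(0) (-1)\<^sup>m w\<^sub>0(m)\<close>
  with w_0(m) = (m + 1)^(-k); the sum may be continued past p1 + p2 because higher
  differences of a polynomial vanish. By the binomial theorem for t = (t + x_i) - x_i, both
  binomial sums of the theorem become the same series for t^q f(t). Summation by parts,
  \<open>\<Delta>\<^sup>m\<^sup>+\<^sup>1\<close>(t h)(0) = (m + 1) \<open>\<Delta>\<^sup>m\<close>h(\<open>\<cdot>\<close> + 1)(0), moves each factor t onto the weights as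
  w(m) \<open>\<mapsto>\<close> m w(m) - (m + 1) w(m + 1), and the recursion defining R_{\<open>\<mu>\<close>,k} says
  precisely that q such steps turn w_0 into w_q(m) = -R_{q-1,k}(m) / ((m + 1)...(m + q + 1))^k.
\<close>

definition fwd_diff :: "(nat \<Rightarrow> 'a::comm_ring_1) \<Rightarrow> nat \<Rightarrow> 'a" where
  "fwd_diff h n = (\<Sum>j\<le>n. (-1)^j * of_nat (n choose j) * h (n - j))"

lemma fwd_diff_0 [simp]: "fwd_diff h 0 = h 0"
  by (simp add: fwd_diff_def)

lemma fwd_diff_Suc: "fwd_diff h (Suc n) = fwd_diff (\<lambda>t. h (Suc t)) n - fwd_diff h n"
proof -
  have "fwd_diff h (Suc n) =
      (\<Sum>j\<le>n. (-1)^j * of_nat (n choose j) * h (Suc n - j))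
      + (\<Sum>j\<le>n. (-1)^Suc j * of_nat (n choose j) * h (n - j))"
  proof -
    have "fwd_diff h (Suc n) = h (Suc n)
        + (\<Sum>j\<le>n. (-1)^Suc j * of_nat ((n choose j) + (n choose Suc j)) * h (n - j))"
      unfolding fwd_diff_def by (subst sum.atMost_Suc_shift) simp
    also have "\<dots> = (h (Suc n) + (\<Sum>j\<le>n. (-1)^Suc j * of_nat (n choose Suc j) * h (n - j)))
        + (\<Sum>j\<le>n. (-1)^Suc j * of_nat (n choose j) * h (n - j))"
      by (simp add: ring_distribs sum.distrib[symmetric] add_ac)
    also have "h (Suc n) + (\<Sum>j\<le>n. (-1)^Suc j * of_nat (n choose Suc j) * h (n - j))
        = (\<Sum>j\<le>Suc n. (-1)^j * of_nat (n choose j) * h (Suc n - j))"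
      by (subst sum.atMost_Suc_shift) simp
    also have "\<dots> = (\<Sum>j\<le>n. (-1)^j * of_nat (n choose j) * h (Suc n - j))"
      by (simp add: binomial_eq_0)
    finally show ?thesis .
  qed
  also have "(\<Sum>j\<le>n. (-1)^j * of_nat (n choose j) * h (Suc n - j)) = fwd_diff (\<lambda>t. h (Suc t)) n"
    unfolding fwd_diff_def by (intro sum.cong) (auto simp: Suc_diff_le)
  finally show ?thesis
    by (simp add: fwd_diff_def sum_negf)
qed

lemma fwd_diff_zero [simp]: "fwd_diff (\<lambda>_. 0) n = 0"
  by (simp add: fwd_diff_def)

lemma fwd_diff_add: "fwd_diff (\<lambda>t. f t + g t) n = fwd_diff f n + fwd_diff g n"
  by (simp add: fwd_diff_def algebra_simps sum.distrib)

lemma fwd_diff_cmult: "fwd_diff (\<lambda>t. c * f t) n = c * fwd_diff f n"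
  by (simp add: fwd_diff_def algebra_simps sum_distrib_left)

lemma fwd_diff_sum:
  "finite A \<Longrightarrow> fwd_diff (\<lambda>t. \<Sum>a\<in>A. F a t) n = (\<Sum>a\<in>A. fwd_diff (F a) n)"
  by (induction A rule: finite_induct) (simp_all add: fwd_diff_add)

lemma fwd_diff_Suc_eq_diff: "fwd_diff h (Suc n) = fwd_diff (\<lambda>t. h (Suc t) - h t) n"
proof -
  have "fwd_diff (\<lambda>t. h (Suc t) + (-1) * h t) n = fwd_diff (\<lambda>t. h (Suc t)) n + (-1) * fwd_diff h n"
    by (simp only: fwd_diff_add fwd_diff_cmult)
  then show ?thesis by (simp add: fwd_diff_Suc)
qed

lemma fwd_diff_of_nat_mult:
  "fwd_diff (\<lambda>t. of_nat t * h t) (Suc m) = of_nat (Suc m) * fwd_diff (\<lambda>t. h (Suc t)) m"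
proof (induction m arbitrary: h)
  case 0
  then show ?case by (simp add: fwd_diff_Suc)
next
  case (Suc m)
  have shift: "(\<lambda>t. of_nat (Suc t) * h (Suc t)) = (\<lambda>t. of_nat t * h (Suc t) + h (Suc t))"
    by (auto simp: algebra_simps)
  have "fwd_diff (\<lambda>t. of_nat t * h t) (Suc (Suc m))
      = fwd_diff (\<lambda>t. of_nat t * h (Suc t)) (Suc m) + fwd_diff (\<lambda>t. h (Suc t)) (Suc m)
        - fwd_diff (\<lambda>t. of_nat t * h t) (Suc m)"
    by (subst fwd_diff_Suc) (simp add: shift fwd_diff_add del: of_nat_Suc)
  also have "\<dots> = of_nat (Suc m) * fwd_diff (\<lambda>t. h (Suc (Suc t))) m
      + fwd_diff (\<lambda>t. h (Suc t)) (Suc m) - of_nat (Suc m) * fwd_diff (\<lambda>t. h (Suc t)) m"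
    using Suc.IH[of "\<lambda>t. h (Suc t)"] Suc.IH[of h] by simp
  also have "\<dots> = of_nat (Suc (Suc m)) * fwd_diff (\<lambda>t. h (Suc t)) (Suc m)"
    unfolding fwd_diff_Suc[of "\<lambda>t. h (Suc t)" m] by (simp add: algebra_simps)
  finally show ?case .
qed

inductive poly_fun :: "nat \<Rightarrow> (nat \<Rightarrow> 'a::comm_ring_1) \<Rightarrow> bool" where
  const: "poly_fun d (\<lambda>_. c)"
| linear_mult: "poly_fun d h \<Longrightarrow> poly_fun (Suc d) (\<lambda>t. (of_nat t + c) * h t)"
| add: "poly_fun d f \<Longrightarrow> poly_fun d g \<Longrightarrow> poly_fun d (\<lambda>t. f t + g t)"

lemma poly_fun_0_const: "poly_fun 0 h \<Longrightarrow> h t = h 0"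
  by (induction "0::nat" h rule: poly_fun.induct) auto

lemma poly_fun_shift: "poly_fun d h \<Longrightarrow> poly_fun d (\<lambda>t. h (Suc t))"
proof (induction rule: poly_fun.induct)
  case (linear_mult d h c)
  have "poly_fun (Suc d) (\<lambda>t. (of_nat t + (c + 1)) * h (Suc t))"
    by (rule poly_fun.linear_mult[OF linear_mult.IH])
  then show ?case by (simp add: algebra_simps)
qed (auto intro: poly_fun.intros)

lemma poly_fun_diff: "poly_fun d h \<Longrightarrow> poly_fun (d - 1) (\<lambda>t. h (Suc t) - h t)"
proof (induction rule: poly_fun.induct)
  case (const d c)
  then show ?case using poly_fun.const[of _ 0] by simp
next
  case (linear_mult d h c)
  show ?case
  proof (cases d)
    case 0
    then have h_const: "h t = h 0" for t using linear_mult(1) poly_fun_0_const by blast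
    have "(\<lambda>t. (of_nat (Suc t) + c) * h (Suc t) - (of_nat t + c) * h t) = (\<lambda>_. h 0)"
    proof
      fix t
      show "(of_nat (Suc t) + c) * h (Suc t) - (of_nat t + c) * h t = h 0"
        by (simp add: h_const[of t] h_const[of "Suc t"] algebra_simps)
    qed
    then show ?thesis by (simp add: poly_fun.const)
  next
    case (Suc d')
    have "poly_fun d (\<lambda>t. (of_nat t + c) * (h (Suc t) - h t) + h (Suc t))"
      using poly_fun.linear_mult[OF linear_mult.IH, of c] poly_fun_shift[OF linear_mult(1)] Suc
      by (auto intro: poly_fun.add)
    then show ?thesis by (simp add: algebra_simps)
  qed
next
  case (add d f g)
  have "poly_fun (d - 1) (\<lambda>t. (f (Suc t) - f t) + (g (Suc t) - g t))"
    by (rule poly_fun.add[OF add.IH])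
  then show ?case by (simp add: algebra_simps)
qed

lemma fwd_diff_poly_fun_eq_0: "poly_fun d h \<Longrightarrow> d < n \<Longrightarrow> fwd_diff h n = 0"
proof (induction n arbitrary: d h)
  case (Suc n)
  show ?case
  proof (cases d)
    case 0
    then have "(\<lambda>t. h (Suc t) - h t) = (\<lambda>_. 0)"
      using Suc.prems(1) poly_fun_0_const by (metis diff_self)
    then show ?thesis by (simp add: fwd_diff_Suc_eq_diff)
  next
    case (Suc d')
    then show ?thesis
      using Suc.IH[OF poly_fun_diff[OF Suc.prems(1)]] Suc.prems(2) by (simp add: fwd_diff_Suc_eq_diff)
  qed
qed simp

lemma poly_fun_power_mult: "poly_fun d h \<Longrightarrow> poly_fun (d + n) (\<lambda>t. (of_nat t + c)^n * h t)"
proof (induction n)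
  case (Suc n)
  have "poly_fun (Suc (d + n)) (\<lambda>t. (of_nat t + c) * ((of_nat t + c)^n * h t))"
    by (rule poly_fun.linear_mult[OF Suc.IH[OF Suc.prems]])
  then show ?case by (simp add: mult.assoc)
qed simp

definition diff_series :: "(nat \<Rightarrow> 'a::comm_ring_1) \<Rightarrow> (nat \<Rightarrow> 'a) \<Rightarrow> nat \<Rightarrow> 'a" where
  "diff_series w h N = (\<Sum>m\<le>N. fwd_diff h m * (-1)^m * w m)"

lemma diff_series_sum:
  "finite A \<Longrightarrow> diff_series w (\<lambda>t. \<Sum>a\<in>A. c a * F a t) N = (\<Sum>a\<in>A. c a * diff_series w (F a) N)"
  unfolding diff_series_def
  by (simp add: fwd_diff_sum fwd_diff_cmult sum_distrib_left sum_distrib_right mult.assoc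
      sum.swap[of _ A])

lemma diff_series_truncate:
  assumes "poly_fun d h" "d \<le> N"
  shows "diff_series w h N = diff_series w h d"
  using assms(2)
proof (induction N rule: dec_induct)
  case (step N)
  then show ?case
    using fwd_diff_poly_fun_eq_0[OF assms(1), of "Suc N"] by (simp add: diff_series_def)
qed simp

lemma diff_series_of_nat_mult:
  "diff_series w (\<lambda>t. of_nat t * h t) N =
     diff_series (\<lambda>m. of_nat m * w m - of_nat (Suc m) * w (Suc m)) h N
     + of_nat (Suc N) * fwd_diff h N * (-1)^N * w (Suc N)"
proof (induction N)
  case (Suc N)
  have "fwd_diff (\<lambda>t. of_nat t * h t) (Suc N) = of_nat (Suc N) * (fwd_diff h (Suc N) + fwd_diff h N)"
    using fwd_diff_of_nat_mult[of h N] fwd_diff_Suc[of h N] by simp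
  with Suc.IH show ?case
    unfolding diff_series_def by (simp add: algebra_simps del: of_nat_Suc)
qed (simp add: diff_series_def)

lemma prod_of_nat_add_eq_pochhammer:
  "(\<Prod>i=1..n. of_nat (m + i) :: 'a::comm_semiring_1) = pochhammer (of_nat m + 1) n"
  by (induction n) (simp_all add: pochhammer_rec' algebra_simps)

lemma pochhammer_of_nat_Suc_nonzero:
  "pochhammer (of_nat m + 1 :: 'a::{comm_semiring_1, semiring_char_0}) n \<noteq> 0"
proof -
  have "pochhammer (of_nat m + 1 :: 'a) n = of_nat (pochhammer (Suc m) n)"
    by (simp add: pochhammer_of_nat[symmetric] add.commute)
  then show ?thesis by (simp add: pochhammer_pos)
qed

definition R_weight :: "int \<Rightarrow> nat \<Rightarrow> nat \<Rightarrow> complex" where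
  "R_weight k q m = - Rfun k q (of_nat m) / pochhammer (of_nat m + 1) (Suc q) powi k"

lemma R_weight_0: "R_weight k 0 m = 1 / of_nat (Suc m) powi k"
  by (simp add: R_weight_def add.commute)

lemma R_weight_Suc:
  "R_weight k (Suc q) m = of_nat m * R_weight k q m - of_nat (Suc m) * R_weight k q (Suc m)"
proof -
  define P where "P m = pochhammer (of_nat m + 1 :: complex) (Suc q)" for m
  define Q where "Q = pochhammer (of_nat m + 1 :: complex) (Suc (Suc q)) powi k"
  define a :: complex where "a = of_nat m + of_nat q + 2"
  define b :: complex where "b = of_nat (Suc m)"
  have P_nonzero: "P m \<noteq> 0" "P (Suc m) \<noteq> 0"
    unfolding P_def by (rule pochhammer_of_nat_Suc_nonzero)+
  have a_nonzero: "a \<noteq> 0"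
    using of_nat_neq_0[of "Suc (m + q)", where 'a = complex] by (simp add: a_def add_ac)
  have b_nonzero: "b \<noteq> 0"
    unfolding b_def by (rule of_nat_neq_0)
  note nonzero = P_nonzero a_nonzero b_nonzero
  have "pochhammer (of_nat m + 1 :: complex) (Suc (Suc q)) = P m * a"
    by (simp add: P_def a_def pochhammer_rec'[of _ "Suc q"] mult.commute add_ac)
  then have "Q = P m powi k * a powi k"
    by (simp add: Q_def power_int_mult_distrib)
  then have left: "of_nat m * a powi k * Rfun k q (of_nat m) / Q = - (of_nat m * R_weight k q m)"
    using nonzero by (simp add: R_weight_def P_def)
  have "pochhammer (of_nat m + 1 :: complex) (Suc (Suc q)) = b * P (Suc m)"
    by (simp add: P_def b_def pochhammer_rec[of _ "Suc q"] add_ac)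
  then have "Q = b powi k * P (Suc m) powi k"
    by (simp add: Q_def power_int_mult_distrib)
  then have right: "b powi k * b * Rfun k q b / Q = - (of_nat (Suc m) * R_weight k q (Suc m))"
    using nonzero by (simp add: R_weight_def P_def b_def field_simps)
  have "Rfun k (Suc q) (of_nat m) =
      of_nat m * a powi k * Rfun k q (of_nat m) - b powi k * b * Rfun k q b"
    using nonzero by (simp add: a_def b_def power_int_add algebra_simps)
  then show ?thesis
    by (simp add: R_weight_def[of k "Suc q"] flip: Q_def) (simp add: diff_divide_distrib left right)
qed

lemma diff_series_power_mult:
  assumes "poly_fun d h" "d + q \<le> N"
  shows "diff_series (R_weight k 0) (\<lambda>t. of_nat t ^ q * h t) N = diff_series (R_weight k q) h N"
  using assms
proof (induction q arbitrary: d h)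
  case (Suc q)
  have "poly_fun (Suc d) (\<lambda>t. of_nat t * h t)"
    using poly_fun.linear_mult[OF Suc.prems(1), of 0] by simp
  then have "diff_series (R_weight k 0) (\<lambda>t. of_nat t ^ q * (of_nat t * h t)) N
      = diff_series (R_weight k q) (\<lambda>t. of_nat t * h t) N"
    using Suc.IH Suc.prems(2) by simp
  then have "diff_series (R_weight k 0) (\<lambda>t. of_nat t ^ Suc q * h t) N
      = diff_series (R_weight k q) (\<lambda>t. of_nat t * h t) N"
    by (simp add: mult_ac)
  also have "\<dots> = diff_series (R_weight k (Suc q)) h N"
  proof -
    have "(\<lambda>m. of_nat m * R_weight k q m - of_nat (Suc m) * R_weight k q (Suc m)) = R_weight k (Suc q)"
      by (rule ext) (rule R_weight_Suc[symmetric])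
    then show ?thesis
      using fwd_diff_poly_fun_eq_0[OF Suc.prems(1), of N] Suc.prems(2)
      by (simp only: diff_series_of_nat_mult) simp
  qed
  finally show ?case .
qed simp

lemma diff_series_binomial:
  "(\<Sum>l=0..q. of_nat (q choose l) * (-x)^(q - l) * diff_series w (\<lambda>t. (of_nat t + x)^(a + l) * g t) N)
     = diff_series w (\<lambda>t. of_nat t ^ q * ((of_nat t + x)^a * g t)) N"
proof -
  have "of_nat t ^ q * ((of_nat t + x)^a * g t) =
      (\<Sum>l=0..q. (of_nat (q choose l) * (-x)^(q - l)) * ((of_nat t + x)^(a + l) * g t))" for t
  proof -
    have "of_nat t ^ q = ((of_nat t + x) + -x)^q" by simp
    also have "\<dots> = (\<Sum>l\<le>q. of_nat (q choose l) * (of_nat t + x)^l * (-x)^(q - l))"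
      by (rule binomial_ring)
    finally show ?thesis
      by (simp add: atLeast0AtMost sum_distrib_left sum_distrib_right power_add mult_ac)
  qed
  then show ?thesis
    by (simp add: diff_series_sum)
qed

lemma poly_fun_power_mult_power:
  fixes x1 x2 :: "'a::comm_ring_1"
  shows "poly_fun (a + b) (\<lambda>t. (of_nat t + x1)^a * (of_nat t + x2)^b)"
proof -
  have "poly_fun b (\<lambda>t. (of_nat t + x2)^b)"
    using poly_fun_power_mult[OF poly_fun.const[of 0 1], where n = b and c = x2] by simp
  then have "poly_fun (b + a) (\<lambda>t. (of_nat t + x1)^a * (of_nat t + x2)^b)"
    by (rule poly_fun_power_mult)
  then show ?thesis by (simp add: add.commute)
qed

lemma gen_stirling_eq_fwd_diff:
  "gen_stirling x1 x2 p2 p1 l =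
     fwd_diff (\<lambda>t. (of_nat t + x1)^p1 * (of_nat t + x2)^p2) l / of_nat (fact l)"
  unfolding gen_stirling_def fwd_diff_def by (simp add: atLeast0AtMost mult.assoc)

lemma bipoly_bernoulli_eq_diff_series:
  assumes "a + b \<le> N"
  shows "bipoly_bernoulli k a b x1 x2 =
    diff_series (R_weight k 0) (\<lambda>t. (of_nat t + x1)^a * (of_nat t + x2)^b) N"
proof -
  have "bipoly_bernoulli k a b x1 x2 =
      diff_series (R_weight k 0) (\<lambda>t. (of_nat t + x1)^a * (of_nat t + x2)^b) (a + b)"
    unfolding bipoly_bernoulli_def diff_series_def R_weight_0 gen_stirling_eq_fwd_diff atLeast0AtMost
    by (intro sum.cong refl) (simp add: field_simps)
  also have "\<dots> = diff_series (R_weight k 0) (\<lambda>t. (of_nat t + x1)^a * (of_nat t + x2)^b) N"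
    by (rule diff_series_truncate[OF poly_fun_power_mult_power assms, symmetric])
  finally show ?thesis .
qed

lemma bipoly_bernoulli_swap: "bipoly_bernoulli k p1 p2 x1 x2 = bipoly_bernoulli k p2 p1 x2 x1"
  by (simp add: bipoly_bernoulli_def gen_stirling_def mult_ac add.commute)

lemma binomial_sum_bipoly_bernoulli:
  "(\<Sum>l=0..q. of_nat (q choose l) * (-x1)^(q - l) * bipoly_bernoulli k (p1 + l) p2 x1 x2)
     = diff_series (R_weight k q) (\<lambda>t. (of_nat t + x1)^p1 * (of_nat t + x2)^p2) (p1 + p2)"
proof -
  define N where "N = p1 + p2 + q"
  have "(\<Sum>l=0..q. of_nat (q choose l) * (-x1)^(q - l) * bipoly_bernoulli k (p1 + l) p2 x1 x2)
      = (\<Sum>l=0..q. of_nat (q choose l) * (-x1)^(q - l) *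
          diff_series (R_weight k 0) (\<lambda>t. (of_nat t + x1)^(p1 + l) * (of_nat t + x2)^p2) N)"
    by (intro sum.cong refl) (simp add: bipoly_bernoulli_eq_diff_series N_def)
  also have "\<dots> = diff_series (R_weight k 0)
      (\<lambda>t. of_nat t ^ q * ((of_nat t + x1)^p1 * (of_nat t + x2)^p2)) N"
    by (rule diff_series_binomial)
  also have "\<dots> = diff_series (R_weight k q) (\<lambda>t. (of_nat t + x1)^p1 * (of_nat t + x2)^p2) N"
    by (rule diff_series_power_mult[OF poly_fun_power_mult_power]) (simp add: N_def)
  also have "\<dots> = diff_series (R_weight k q) (\<lambda>t. (of_nat t + x1)^p1 * (of_nat t + x2)^p2) (p1 + p2)"
    by (rule diff_series_truncate[OF poly_fun_power_mult_power]) (simp add: N_def)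
  finally show ?thesis .
qed

theorem proposition4p2:
  fixes p1 p2 q :: nat and k :: int and x1 x2 :: complex
  shows "(\<Sum>l=0..q. of_nat (q choose l) * (-x1)^(q - l) * bipoly_bernoulli k (p1 + l) p2 x1 x2)
           = (\<Sum>l=0..q. of_nat (q choose l) * (-x2)^(q - l) * bipoly_bernoulli k p1 (p2 + l) x1 x2)
       \<and> (\<Sum>l=0..q. of_nat (q choose l) * (-x2)^(q - l) * bipoly_bernoulli k p1 (p2 + l) x1 x2)
           = - (\<Sum>l=0..p1+p2. gen_stirling x1 x2 p2 p1 l *
                 ((-1)^l * of_nat (fact l) * Rfun k q (of_nat l)
                  / (\<Prod>i=1..q+1. of_nat (l + i)) powi k))"
proof -
  let ?f = "\<lambda>t. (of_nat t + x1)^p1 * (of_nat t + x2)^p2"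
  have first: "(\<Sum>l=0..q. of_nat (q choose l) * (-x1)^(q - l) * bipoly_bernoulli k (p1 + l) p2 x1 x2)
      = diff_series (R_weight k q) ?f (p1 + p2)"
    by (rule binomial_sum_bipoly_bernoulli)
  have "(\<Sum>l=0..q. of_nat (q choose l) * (-x2)^(q - l) * bipoly_bernoulli k p1 (p2 + l) x1 x2)
      = diff_series (R_weight k q) (\<lambda>t. (of_nat t + x2)^p2 * (of_nat t + x1)^p1) (p2 + p1)"
    by (subst bipoly_bernoulli_swap) (rule binomial_sum_bipoly_bernoulli)
  then have second: "(\<Sum>l=0..q. of_nat (q choose l) * (-x2)^(q - l) * bipoly_bernoulli k p1 (p2 + l) x1 x2)
      = diff_series (R_weight k q) ?f (p1 + p2)"
    by (simp add: mult.commute add.commute)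
  have "diff_series (R_weight k q) ?f (p1 + p2) = - (\<Sum>l=0..p1+p2. gen_stirling x1 x2 p2 p1 l *
      ((-1)^l * of_nat (fact l) * Rfun k q (of_nat l) / (\<Prod>i=1..q+1. of_nat (l + i)) powi k))"
    unfolding diff_series_def R_weight_def gen_stirling_eq_fwd_diff prod_of_nat_add_eq_pochhammer
      atLeast0AtMost sum_negf[symmetric]
    by (intro sum.cong refl) (simp add: field_simps)
  with first second show ?thesis by simp
qed

end
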